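(* Let $K\in\mathcal S_2\setminus\{\emptyset,\mathbb R^2\}$ and $u\in S^1$. Then the Steiner symmetral $S_u(K)$ of $K$ in direction $u$ also belongs to $\mathcal S_2$.
   Context: $B(x,r)$ is the closed Euclidean disk. $\mathcal S_2$ is the class of all sets of the form $\bigcap_{x\in A}B(x,1)$ for $A\subseteq\mathbb R^2$. For a convex body $L$ and $u\in S^{1}$, the Steiner symmetral is $S_u(L)=\{x+tu:\ x\in P_{u^\perp}L,\ |t|\le\tfrac{b(x)-a(x)}2\}$, where $L\cap(x+\mathbb Ru)=[x+a(x)u,x+b(x)u]$. *)

theory Defs
  imports "HOL-Analysis.Analysis"
begin

definition S2 :: "(real^2) set set" where
  "S2 = {K. \<exists>A. K = (\<Inter>x\<in>A. cball x 1)}"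

definition proj_perp :: "real^2 \<Rightarrow> real^2 \<Rightarrow> real^2" where
  "proj_perp u y = y - (y \<bullet> u) *\<^sub>R u"

definition chord_lo :: "(real^2) set \<Rightarrow> real^2 \<Rightarrow> real^2 \<Rightarrow> real" where
  "chord_lo L u x = Inf {t. x + t *\<^sub>R u \<in> L}"

definition chord_hi :: "(real^2) set \<Rightarrow> real^2 \<Rightarrow> real^2 \<Rightarrow> real" where
  "chord_hi L u x = Sup {t. x + t *\<^sub>R u \<in> L}"

definition steiner_sym :: "real^2 \<Rightarrow> (real^2) set \<Rightarrow> (real^2) set" where
  "steiner_sym u L = {x + t *\<^sub>R u | x t. x \<in> proj_perp u ` L \<and>
      \<bar>t\<bar> \<le> (chord_hi L u x - chord_lo L u x) / 2}"

end

(*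
  A set lies in S2 exactly when it is the intersection of all unit disks containing it, so it
  suffices to separate every point p outside the symmetral S_u(K) from S_u(K) by a unit disk.
  Work in the coordinates (y.v, y.u) for a unit vector v orthogonal to u.

  If p lies beyond K in direction v (or -v), take a point Q of K extreme in that direction:
  K lies in the unit disk supporting it at Q, and symmetrizing that disk gives a disk that
  contains S_u(K) but not p.

  Otherwise p lies above the chord of K over p (after possibly reversing u). K lies in two unit
  disks touching the top and the bottom of this chord, because a supporting line of an
  intersection of unit disks can be replaced by the unit disk touching it from inside. Over each
  abscissa the half-width of S_u(K) is therefore at most the mean of an upper and a lower
  unit-circle arc, and this mean stays below a single unit-circle arc with the same tangent over
  p: averaging two curves of curvature 1 gives curvature at most 1, by convexity of
  z \<mapsto> (1 + z^2)^(3/2). The disk bounded by that arc contains S_u(K) but not p.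
*)

theory Submission
  imports Defs
begin

section \<open>Arcs of the unit circle\<close>

definition circle_height :: "real \<Rightarrow> real" where
  "circle_height y = sqrt (1 - y\<^sup>2)"

text \<open>\<open>circle_slope\<close> is minus the derivative of \<open>circle_height\<close>, and \<open>mean_slope_abscissa \<alpha> \<beta>\<close>
  is the abscissa where the arc has the mean of its slopes at \<open>\<alpha>\<close> and \<open>\<beta>\<close>.\<close>

definition circle_slope :: "real \<Rightarrow> real" where
  "circle_slope y = y / sqrt (1 - y\<^sup>2)"

definition circle_slope_inv :: "real \<Rightarrow> real" where
  "circle_slope_inv z = z / sqrt (1 + z\<^sup>2)"

definition mean_slope_abscissa :: "real \<Rightarrow> real \<Rightarrow> real" where
  "mean_slope_abscissa \<alpha> \<beta> = circle_slope_inv ((circle_slope \<alpha> + circle_slope \<beta>) / 2)"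

lemma circle_height_uminus: "circle_height (- y) = circle_height y"
  by (simp add: circle_height_def)

lemma circle_slope_uminus: "circle_slope (- y) = - circle_slope y"
  by (simp add: circle_slope_def)

lemma circle_slope_inv_uminus: "circle_slope_inv (- z) = - circle_slope_inv z"
  by (simp add: circle_slope_inv_def)

lemma mean_slope_abscissa_uminus:
  "mean_slope_abscissa (- \<alpha>) (- \<beta>) = - mean_slope_abscissa \<alpha> \<beta>"
proof -
  have "(circle_slope (- \<alpha>) + circle_slope (- \<beta>)) / 2 = - ((circle_slope \<alpha> + circle_slope \<beta>) / 2)"
    by (simp add: circle_slope_uminus field_simps)
  then show ?thesis unfolding mean_slope_abscissa_def by (simp only: circle_slope_inv_uminus)
qed

lemma sqrt_one_plus_circle_slope_sq:
  assumes "\<bar>y\<bar> < 1"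
  shows "sqrt (1 + (circle_slope y)\<^sup>2) = 1 / sqrt (1 - y\<^sup>2)"
proof -
  have "0 < 1 - y\<^sup>2" using assms by (simp add: abs_square_less_1)
  then have "1 + (circle_slope y)\<^sup>2 = 1 / (1 - y\<^sup>2)"
    by (simp add: circle_slope_def power_divide field_simps)
  then show ?thesis by (simp add: real_sqrt_divide)
qed

lemma circle_slope_inv_circle_slope:
  assumes "\<bar>y\<bar> < 1"
  shows "circle_slope_inv (circle_slope y) = y"
proof -
  have "0 < 1 - y\<^sup>2" using assms by (simp add: abs_square_less_1)
  with sqrt_one_plus_circle_slope_sq[OF assms] show ?thesis
    by (simp add: circle_slope_inv_def circle_slope_def)
qed

lemma circle_slope_circle_slope_inv: "circle_slope (circle_slope_inv z) = z"
proof -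
  have pos: "0 < 1 + z\<^sup>2" by (simp add: add_pos_nonneg)
  then have "1 - (circle_slope_inv z)\<^sup>2 = 1 / (1 + z\<^sup>2)"
    by (simp add: circle_slope_inv_def power_divide field_simps)
  with pos show ?thesis
    by (simp add: circle_slope_def circle_slope_inv_def real_sqrt_divide)
qed

lemma abs_circle_slope_inv_less_1: "\<bar>circle_slope_inv z\<bar> < 1"
proof -
  have "\<bar>z\<bar> < sqrt (1 + z\<^sup>2)" by (rule real_less_rsqrt) simp
  then show ?thesis by (simp add: circle_slope_inv_def abs_div add_pos_nonneg)
qed

lemma circle_height_has_derivative:
  assumes "\<bar>y\<bar> < 1"
  shows "(circle_height has_real_derivative - circle_slope y) (at y)"
proof -
  have "0 < 1 - y\<^sup>2" using assms by (simp add: abs_square_less_1)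
  then show ?thesis unfolding circle_height_def [abs_def] circle_slope_def
    by (auto intro!: derivative_eq_intros simp: divide_simps)
qed

lemma circle_slope_has_derivative:
  assumes "\<bar>y\<bar> < 1"
  shows "(circle_slope has_real_derivative sqrt (1 + (circle_slope y)\<^sup>2) ^ 3) (at y)"
proof -
  have "0 < 1 - y\<^sup>2" using assms by (simp add: abs_square_less_1)
  then have "(circle_slope has_real_derivative 1 / sqrt (1 - y\<^sup>2) ^ 3) (at y)"
    unfolding circle_slope_def [abs_def]
    by (auto intro!: derivative_eq_intros simp: divide_simps power3_eq_cube)
      (simp add: power2_eq_square algebra_simps)
  then show ?thesis by (simp add: sqrt_one_plus_circle_slope_sq[OF assms] power_one_over)
qed

lemma circle_slope_inv_has_derivative:
  "(circle_slope_inv has_real_derivative 1 / sqrt (1 + z\<^sup>2) ^ 3) (at z)"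
proof -
  have "0 < 1 + z\<^sup>2" by (simp add: add_pos_nonneg)
  then show ?thesis unfolding circle_slope_inv_def [abs_def]
    by (auto intro!: derivative_eq_intros simp: divide_simps power3_eq_cube)
      (simp add: power2_eq_square algebra_simps)
qed

lemma strict_mono_circle_slope_inv: "strict_mono circle_slope_inv"
proof (rule strict_monoI)
  fix a b :: real
  assume "a < b"
  then show "circle_slope_inv a < circle_slope_inv b"
    by (rule DERIV_pos_imp_increasing)
      (use circle_slope_inv_has_derivative in \<open>force simp: add_pos_nonneg\<close>)
qed

lemma circle_slope_le_iff:
  assumes "\<bar>a\<bar> < 1" "\<bar>b\<bar> < 1"
  shows "circle_slope a \<le> circle_slope b \<longleftrightarrow> a \<le> b"
  using strict_mono_less_eq[OF strict_mono_circle_slope_inv, of "circle_slope a" "circle_slope b"]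
  by (simp add: circle_slope_inv_circle_slope assms)

lemma mean_slope_abscissa_between:
  assumes "\<bar>\<alpha>\<bar> < 1" "\<bar>\<beta>\<bar> < 1"
  shows "min \<alpha> \<beta> \<le> mean_slope_abscissa \<alpha> \<beta>" "mean_slope_abscissa \<alpha> \<beta> \<le> max \<alpha> \<beta>"
proof -
  have "circle_slope (min \<alpha> \<beta>) \<le> (circle_slope \<alpha> + circle_slope \<beta>) / 2"
    "(circle_slope \<alpha> + circle_slope \<beta>) / 2 \<le> circle_slope (max \<alpha> \<beta>)"
    using circle_slope_le_iff[OF assms] by (auto simp: min_def max_def)
  then have "circle_slope_inv (circle_slope (min \<alpha> \<beta>)) \<le> mean_slope_abscissa \<alpha> \<beta>"
    "mean_slope_abscissa \<alpha> \<beta> \<le> circle_slope_inv (circle_slope (max \<alpha> \<beta>))"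
    unfolding mean_slope_abscissa_def
    using strict_mono_less_eq[OF strict_mono_circle_slope_inv] by blast+
  moreover have "\<bar>min \<alpha> \<beta>\<bar> < 1" "\<bar>max \<alpha> \<beta>\<bar> < 1" using assms by auto
  ultimately show "min \<alpha> \<beta> \<le> mean_slope_abscissa \<alpha> \<beta>" "mean_slope_abscissa \<alpha> \<beta> \<le> max \<alpha> \<beta>"
    by (simp_all add: circle_slope_inv_circle_slope)
qed

lemma circle_height_mean_slope_abscissa_ge_min:
  assumes "\<bar>\<alpha>\<bar> < 1" "\<bar>\<beta>\<bar> < 1"
  shows "min (circle_height \<alpha>) (circle_height \<beta>) \<le> circle_height (mean_slope_abscissa \<alpha> \<beta>)"
proof -
  define \<gamma> where "\<gamma> = mean_slope_abscissa \<alpha> \<beta>"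
  have "\<bar>\<gamma>\<bar> \<le> max \<bar>\<alpha>\<bar> \<bar>\<beta>\<bar>"
    using mean_slope_abscissa_between[OF assms]
    by (auto simp: \<gamma>_def abs_real_def min_def max_def split: if_splits)
  then have "\<gamma>\<^sup>2 \<le> max (\<alpha>\<^sup>2) (\<beta>\<^sup>2)"
    by (metis abs_le_square_iff max_def power2_abs)
  then show ?thesis by (auto simp: circle_height_def \<gamma>_def min_def max_def)
qed

lemma sqrt_one_plus_sq_cube_midpoint_le:
  fixes a b :: real
  shows "sqrt (1 + ((a + b) / 2)\<^sup>2) ^ 3 \<le> (sqrt (1 + a\<^sup>2) ^ 3 + sqrt (1 + b\<^sup>2) ^ 3) / 2"
proof -
  have norm_eq: "sqrt (1 + z\<^sup>2) = norm (1::real, z)" for z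
    by (simp add: norm_Pair)
  have mid: "(1::real, (a + b) / 2) = (1/2) *\<^sub>R ((1::real, a) + (1, b))"
    by simp
  have "sqrt (1 + ((a + b) / 2)\<^sup>2) \<le> (sqrt (1 + a\<^sup>2) + sqrt (1 + b\<^sup>2)) / 2"
    unfolding norm_eq mid norm_scaleR using norm_triangle_ineq[of "(1::real, a)" "(1, b)"] by simp
  then have "sqrt (1 + ((a + b) / 2)\<^sup>2) ^ 3 \<le> ((sqrt (1 + a\<^sup>2) + sqrt (1 + b\<^sup>2)) / 2) ^ 3"
    by (rule power_mono) simp
  also have "\<dots> \<le> (sqrt (1 + a\<^sup>2) ^ 3 + sqrt (1 + b\<^sup>2) ^ 3) / 2"
    using convex_onD[OF convex_power_odd[of 3], of "1/2" "sqrt (1 + a\<^sup>2)" "sqrt (1 + b\<^sup>2)"]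
    by (simp add: field_simps)
  finally show ?thesis .
qed

lemma circle_slope_mean_slope_abscissa_le:
  assumes \<alpha>\<beta>: "\<bar>\<alpha>\<bar> < 1" "\<bar>\<beta>\<bar> < 1" and X: "0 \<le> X" "X + \<alpha> < 1" "X + \<beta> < 1"
  shows "circle_slope (X + mean_slope_abscissa \<alpha> \<beta>)
    \<le> (circle_slope (X + \<alpha>) + circle_slope (X + \<beta>)) / 2"
proof -
  \<comment> \<open>\<open>circle_slope\<close> solves \<open>z' = (1 + z\<^sup>2)\<^bsup>3/2\<^esup>\<close>; by convexity of the right-hand side the
    mean \<open>m\<close> of two shifted solutions is a supersolution, which \<open>circle_slope_inv\<close> turns into
    a monotone comparison.\<close>
  define m where "m t = (circle_slope (t + \<alpha>) + circle_slope (t + \<beta>)) / 2" for t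
  have "circle_slope_inv (m 0) - 0 \<le> circle_slope_inv (m X) - X"
  proof (rule DERIV_nonneg_imp_nondecreasing[OF \<open>0 \<le> X\<close>])
    fix t
    assume "0 \<le> t" "t \<le> X"
    then have t: "\<bar>t + \<alpha>\<bar> < 1" "\<bar>t + \<beta>\<bar> < 1" using \<alpha>\<beta> X by auto
    define z1 z2 where "z1 = circle_slope (t + \<alpha>)" and "z2 = circle_slope (t + \<beta>)"
    have "(m has_real_derivative (sqrt (1 + z1\<^sup>2) ^ 3 + sqrt (1 + z2\<^sup>2) ^ 3) / 2) (at t)"
      unfolding m_def [abs_def] z1_def z2_def
      by (intro DERIV_cdivide DERIV_add circle_slope_has_derivative[OF t(1), unfolded DERIV_shift]
          circle_slope_has_derivative[OF t(2), unfolded DERIV_shift])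
    moreover have "m t = (z1 + z2) / 2" by (simp add: m_def z1_def z2_def)
    ultimately have "((\<lambda>t. circle_slope_inv (m t) - t) has_real_derivative
        1 / sqrt (1 + ((z1 + z2) / 2)\<^sup>2) ^ 3
          * ((sqrt (1 + z1\<^sup>2) ^ 3 + sqrt (1 + z2\<^sup>2) ^ 3) / 2) - 1) (at t)"
      using DERIV_diff[OF DERIV_chain2[OF circle_slope_inv_has_derivative] DERIV_ident] by metis
    moreover have "0 \<le> 1 / sqrt (1 + ((z1 + z2) / 2)\<^sup>2) ^ 3
        * ((sqrt (1 + z1\<^sup>2) ^ 3 + sqrt (1 + z2\<^sup>2) ^ 3) / 2) - 1"
      using sqrt_one_plus_sq_cube_midpoint_le[of z1 z2] by (simp add: field_simps add_pos_nonneg)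
    ultimately show "\<exists>y. ((\<lambda>t. circle_slope_inv (m t) - t) has_real_derivative y) (at t) \<and> 0 \<le> y"
      by blast
  qed
  then have le: "X + mean_slope_abscissa \<alpha> \<beta> \<le> circle_slope_inv (m X)"
    by (simp add: mean_slope_abscissa_def m_def)
  moreover have "\<bar>X + mean_slope_abscissa \<alpha> \<beta>\<bar> < 1"
    using le abs_circle_slope_inv_less_1[of "m X"] mean_slope_abscissa_between(1)[OF \<alpha>\<beta>] \<alpha>\<beta> X(1)
    by (auto simp: abs_less_iff)
  ultimately have
    "circle_slope (X + mean_slope_abscissa \<alpha> \<beta>) \<le> circle_slope (circle_slope_inv (m X))"
    using circle_slope_le_iff abs_circle_slope_inv_less_1 by blast
  then show ?thesis by (simp add: circle_slope_circle_slope_inv m_def)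
qed

lemma abs_add_mean_slope_abscissa_le:
  assumes "\<bar>\<alpha>\<bar> < 1" "\<bar>\<beta>\<bar> < 1" "\<bar>X + \<alpha>\<bar> \<le> 1" "\<bar>X + \<beta>\<bar> \<le> 1"
  shows "\<bar>X + mean_slope_abscissa \<alpha> \<beta>\<bar> \<le> 1"
  using mean_slope_abscissa_between[OF assms(1,2)] assms(3,4)
  by (auto simp: min_def max_def abs_le_iff split: if_splits)

lemma circle_height_increment_mean_le_nonneg:
  assumes \<alpha>\<beta>: "\<bar>\<alpha>\<bar> < 1" "\<bar>\<beta>\<bar> < 1" and X: "0 \<le> X" "X + \<alpha> \<le> 1" "X + \<beta> \<le> 1"
  defines "\<gamma> \<equiv> mean_slope_abscissa \<alpha> \<beta>"
  shows "(circle_height (X + \<alpha>) + circle_height (X + \<beta>)) / 2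
      - (circle_height \<alpha> + circle_height \<beta>) / 2
    \<le> circle_height (X + \<gamma>) - circle_height \<gamma>"
proof -
  define g where
    "g t = circle_height (t + \<gamma>) - (circle_height (t + \<alpha>) + circle_height (t + \<beta>)) / 2" for t
  have "g 0 \<le> g X"
  proof (rule DERIV_nonneg_imp_increasing_open[OF X(1)])
    fix t
    assume t: "0 < t" "t < X"
    then have h: "\<bar>t + \<alpha>\<bar> < 1" "\<bar>t + \<beta>\<bar> < 1" "\<bar>t + \<gamma>\<bar> < 1"
      using \<alpha>\<beta> X mean_slope_abscissa_between[OF \<alpha>\<beta>]
      by (auto simp: \<gamma>_def min_def max_def split: if_splits)
    have "(g has_real_derivative
        - circle_slope (t + \<gamma>) - (- circle_slope (t + \<alpha>) + - circle_slope (t + \<beta>)) / 2) (at t)"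
      unfolding g_def [abs_def]
      by (intro DERIV_diff DERIV_cdivide DERIV_add
          circle_height_has_derivative[OF h(1), unfolded DERIV_shift]
          circle_height_has_derivative[OF h(2), unfolded DERIV_shift]
          circle_height_has_derivative[OF h(3), unfolded DERIV_shift])
    moreover have "circle_slope (t + \<gamma>) \<le> (circle_slope (t + \<alpha>) + circle_slope (t + \<beta>)) / 2"
      unfolding \<gamma>_def using circle_slope_mean_slope_abscissa_le[OF \<alpha>\<beta>] t X by simp
    ultimately show "\<exists>y. (g has_real_derivative y) (at t) \<and> 0 \<le> y"
      by (intro exI conjI) auto
  next
    show "continuous_on {0..X} g"
      unfolding g_def [abs_def] circle_height_def by (intro continuous_intros) auto
  qed
  then show ?thesis by (simp add: g_def)
qed

lemma circle_height_increment_mean_le: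
  assumes \<alpha>\<beta>: "\<bar>\<alpha>\<bar> < 1" "\<bar>\<beta>\<bar> < 1" and X: "\<bar>X + \<alpha>\<bar> \<le> 1" "\<bar>X + \<beta>\<bar> \<le> 1"
  defines "\<gamma> \<equiv> mean_slope_abscissa \<alpha> \<beta>"
  shows "(circle_height (X + \<alpha>) + circle_height (X + \<beta>)) / 2
      - (circle_height \<alpha> + circle_height \<beta>) / 2
    \<le> circle_height (X + \<gamma>) - circle_height \<gamma>"
proof (cases "0 \<le> X")
  case True
  then show ?thesis
    using circle_height_increment_mean_le_nonneg[OF \<alpha>\<beta> True] X by (simp add: \<gamma>_def abs_le_iff)
next
  case False
  have "(circle_height (- X + - \<alpha>) + circle_height (- X + - \<beta>)) / 2
      - (circle_height (- \<alpha>) + circle_height (- \<beta>)) / 2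
    \<le> circle_height (- X + mean_slope_abscissa (- \<alpha>) (- \<beta>))
      - circle_height (mean_slope_abscissa (- \<alpha>) (- \<beta>))"
    by (rule circle_height_increment_mean_le_nonneg) (use \<alpha>\<beta> X False in \<open>auto simp: abs_le_iff\<close>)
  then show ?thesis
    unfolding mean_slope_abscissa_uminus \<gamma>_def
    by (metis circle_height_uminus minus_add_distrib)
qed

lemma sq_add_sq_le_1_iff:
  fixes x y :: real
  shows "x\<^sup>2 + y\<^sup>2 \<le> 1 \<longleftrightarrow> \<bar>x\<bar> \<le> 1 \<and> \<bar>y\<bar> \<le> circle_height x"
proof
  assume xy: "x\<^sup>2 + y\<^sup>2 \<le> 1"
  then have "x\<^sup>2 \<le> 1" using zero_le_power2[of y] by linarith
  then have "\<bar>x\<bar> \<le> 1" using abs_square_le_1 by blast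
  moreover have "\<bar>y\<bar> \<le> circle_height x"
    unfolding circle_height_def by (rule real_le_rsqrt) (use xy in simp)
  ultimately show "\<bar>x\<bar> \<le> 1 \<and> \<bar>y\<bar> \<le> circle_height x" by simp
next
  assume xy: "\<bar>x\<bar> \<le> 1 \<and> \<bar>y\<bar> \<le> circle_height x"
  then have "\<bar>y\<bar>\<^sup>2 \<le> (circle_height x)\<^sup>2" by (intro power_mono) auto
  moreover have "x\<^sup>2 \<le> 1" using xy abs_square_le_1 by blast
  ultimately show "x\<^sup>2 + y\<^sup>2 \<le> 1" by (simp add: circle_height_def)
qed

lemma half_width_le_circle_height:
  assumes \<alpha>: "\<bar>\<alpha>1\<bar> < 1" "\<bar>\<alpha>2\<bar> < 1"
    and top: "\<bar>X + \<alpha>1\<bar> \<le> 1" "\<bar>hi - b + circle_height \<alpha>1\<bar> \<le> circle_height (X + \<alpha>1)"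
    and bot: "\<bar>X + \<alpha>2\<bar> \<le> 1" "\<bar>lo - a - circle_height \<alpha>2\<bar> \<le> circle_height (X + \<alpha>2)"
  defines "\<gamma> \<equiv> mean_slope_abscissa \<alpha>1 \<alpha>2"
  shows "(hi - lo) / 2 + (circle_height \<gamma> - (b - a) / 2) \<le> circle_height (X + \<gamma>)"
proof -
  have "hi - lo \<le> (b - a) - (circle_height \<alpha>1 + circle_height \<alpha>2)
      + (circle_height (X + \<alpha>1) + circle_height (X + \<alpha>2))"
    using top(2) bot(2) by (simp only: abs_le_iff) linarith
  moreover have "(circle_height (X + \<alpha>1) + circle_height (X + \<alpha>2)) / 2
      - (circle_height \<alpha>1 + circle_height \<alpha>2) / 2 \<le> circle_height (X + \<gamma>) - circle_height \<gamma>"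
    unfolding \<gamma>_def by (rule circle_height_increment_mean_le[OF \<alpha> top(1) bot(1)])
  ultimately show ?thesis by (simp add: field_simps)
qed

section \<open>Intersections of unit balls\<close>

lemma dist_lens_point_le:
  fixes a Q k n :: "'a::real_inner"
  assumes aQ: "dist a Q \<le> 1" and ak: "dist a k \<le> 1" and n: "norm n = 1"
    and \<theta>: "0 \<le> \<theta>" "\<theta> \<le> 1" and \<epsilon>: "0 \<le> \<epsilon>"
    and balance: "\<theta> * (1 - \<theta>) * (norm (k - Q))\<^sup>2 = 2 * \<epsilon> + \<epsilon>\<^sup>2"
  shows "dist a (Q + \<theta> *\<^sub>R (k - Q) + \<epsilon> *\<^sub>R n) \<le> 1"
proof -
  define g y where "g = a - Q" and "y = k - Q"
  define r where "r = g - \<theta> *\<^sub>R y"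
  have g: "g \<bullet> g \<le> 1" and gy: "(g - y) \<bullet> (g - y) \<le> 1"
    using aQ ak by (simp_all add: g_def y_def dist_norm power_le_one flip: power2_norm_eq_inner)
  have "r \<bullet> r = (1 - \<theta>) * (g \<bullet> g) + \<theta> * ((g - y) \<bullet> (g - y)) - \<theta> * (1 - \<theta>) * (y \<bullet> y)"
    by (simp add: r_def inner_diff_left inner_diff_right inner_commute algebra_simps)
  also have "\<dots> \<le> 1 - \<theta> * (1 - \<theta>) * (y \<bullet> y)"
    using mult_left_mono[OF g, of "1 - \<theta>"] mult_left_mono[OF gy, of \<theta>] \<theta> by simp
  finally have r: "r \<bullet> r \<le> 1 - \<theta> * (1 - \<theta>) * (y \<bullet> y)" .
  moreover have "0 \<le> \<theta> * (1 - \<theta>) * (y \<bullet> y)" using \<theta> by simp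
  ultimately have "(norm r)\<^sup>2 \<le> 1" by (simp add: power2_norm_eq_inner)
  then have "norm r \<le> 1" by (simp add: power_le_one_iff)
  then have "- (r \<bullet> n) \<le> 1"
    using Cauchy_Schwarz_ineq2[of r n] n by simp
  then have "- 2 * \<epsilon> * (r \<bullet> n) \<le> 2 * \<epsilon>"
    using mult_left_mono[of "- (r \<bullet> n)" 1 "2 * \<epsilon>"] \<epsilon> by simp
  moreover have "(a - (Q + \<theta> *\<^sub>R (k - Q) + \<epsilon> *\<^sub>R n)) \<bullet> (a - (Q + \<theta> *\<^sub>R (k - Q) + \<epsilon> *\<^sub>R n))
      = r \<bullet> r - 2 * \<epsilon> * (r \<bullet> n) + \<epsilon>\<^sup>2"
    using n by (simp add: r_def g_def y_def inner_diff_left inner_diff_right inner_add_left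
        inner_add_right inner_commute algebra_simps power2_eq_square norm_eq_1)
  ultimately have "(norm (a - (Q + \<theta> *\<^sub>R (k - Q) + \<epsilon> *\<^sub>R n)))\<^sup>2 \<le> 1"
    using r balance by (simp add: y_def power2_norm_eq_inner)
  then show ?thesis by (simp add: dist_norm power_le_one_iff)
qed

text \<open>If some \<open>k\<close> lay outside the ball, a point of the segment from \<open>Q\<close> to \<open>k\<close>, pushed
  slightly along \<open>n\<close>, would stay in every ball (\<open>dist_lens_point_le\<close>) but cross the supporting
  line.\<close>

lemma Inter_cballs_subset_supporting_cball:
  fixes A :: "'a::real_inner set"
  defines "K \<equiv> \<Inter>a\<in>A. cball a 1"
  assumes Q: "Q \<in> K" and n: "norm n = 1" and supp: "\<And>k. k \<in> K \<Longrightarrow> (k - Q) \<bullet> n \<le> 0"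
  shows "K \<subseteq> cball (Q - n) 1"
proof
  fix k
  assume k: "k \<in> K"
  show "k \<in> cball (Q - n) 1"
  proof (rule ccontr)
    assume "k \<notin> cball (Q - n) 1"
    define y where "y = k - Q"
    define \<sigma> where "\<sigma> = - (y \<bullet> n)"
    define \<delta> where "\<delta> = y \<bullet> y - 2 * \<sigma>"
    define E where "E = (\<sigma> + \<delta> / 4)\<^sup>2 + y \<bullet> y"
    \<comment> \<open>\<open>\<theta>\<close> and \<open>\<epsilon>\<close> solve the balance equation of \<open>dist_lens_point_le\<close> with \<open>\<epsilon> > \<theta> \<sigma>\<close>\<close>
    define \<theta> where "\<theta> = \<delta> / (2 * E)"
    define \<epsilon> where "\<epsilon> = \<theta> * (\<sigma> + \<delta> / 4)"
    have "1 < norm (y + n)"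
      using \<open>k \<notin> cball (Q - n) 1\<close> by (simp add: y_def dist_commute dist_norm algebra_simps)
    then have "1 < (norm (y + n))\<^sup>2" by (rule one_less_power) simp
    moreover have nn: "n \<bullet> n = 1" using n by (simp add: norm_eq_1)
    ultimately have \<delta>: "0 < \<delta>"
      by (simp add: \<delta>_def \<sigma>_def power2_norm_eq_inner inner_add_left inner_add_right inner_commute)
    have \<sigma>: "0 \<le> \<sigma>" using supp[OF k] by (simp add: \<sigma>_def y_def)
    have E: "0 < E" using \<delta> \<sigma> by (simp add: E_def add_pos_nonneg)
    have "\<delta> \<le> y \<bullet> y" using \<sigma> by (simp add: \<delta>_def)
    also have "\<dots> \<le> E" by (simp add: E_def)
    finally have "\<delta> \<le> 2 * E" using E by simp
    then have \<theta>: "0 < \<theta>" "\<theta> \<le> 1" using \<delta> E by (simp_all add: \<theta>_def)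
    have \<epsilon>: "0 \<le> \<epsilon>" using \<theta> \<sigma> \<delta> by (simp add: \<epsilon>_def)
    have "\<theta> * (1 - \<theta>) * (y \<bullet> y) - 2 * \<epsilon> - \<epsilon>\<^sup>2 = \<theta> * (\<delta> / 2 - \<theta> * E)"
      by (simp add: \<epsilon>_def E_def \<delta>_def power2_eq_square field_simps)
    also have "\<dots> = 0" using E by (simp add: \<theta>_def)
    finally have balance: "\<theta> * (1 - \<theta>) * (norm (k - Q))\<^sup>2 = 2 * \<epsilon> + \<epsilon>\<^sup>2"
      by (simp add: y_def power2_norm_eq_inner)
    define z where "z = Q + \<theta> *\<^sub>R (k - Q) + \<epsilon> *\<^sub>R n"
    have "dist a z \<le> 1" if "a \<in> A" for a
      using dist_lens_point_le[of a Q k n \<theta> \<epsilon>] that Q k n \<theta> \<epsilon> balance by (simp add: K_def z_def)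
    then have "z \<in> K" by (simp add: K_def)
    moreover have "(z - Q) \<bullet> n = \<theta> * \<delta> / 4"
      using nn by (simp add: z_def y_def \<epsilon>_def \<sigma>_def \<delta>_def inner_add_left algebra_simps)
    ultimately show False using supp[of z] mult_pos_pos[OF \<theta>(1) \<delta>] by simp
  qed
qed

lemma convex_supporting_normal:
  fixes S :: "'a::euclidean_space set"
  assumes S: "convex S" and Q: "Q \<in> S" and exit: "\<And>e. 0 < e \<Longrightarrow> Q + e *\<^sub>R d \<notin> S"
  obtains n where "norm n = 1" "0 \<le> n \<bullet> d" "\<And>k. k \<in> S \<Longrightarrow> (k - Q) \<bullet> n \<le> 0"
proof -
  define T where "T = (\<lambda>e. Q + e *\<^sub>R d) ` {0<..}"
  have "T = (+) Q ` ((\<lambda>e. e *\<^sub>R d) ` {0<..})" by (simp add: T_def image_image)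
  then have "convex T" by (simp add: convex_translation convex_scaled)
  moreover have "S \<inter> T = {}" "T \<noteq> {}" using exit by (auto simp: T_def)
  ultimately obtain a b where a: "a \<noteq> 0" and aS: "\<forall>x\<in>S. a \<bullet> x \<le> b" and aT: "\<forall>x\<in>T. b \<le> a \<bullet> x"
    using separating_hyperplane_sets[OF S] Q by blast
  have ray: "b \<le> a \<bullet> Q + e * (a \<bullet> d)" if "0 < e" for e
    using aT that by (auto simp: T_def inner_add_right)
  have aQ: "a \<bullet> Q \<le> b" using aS Q by blast
  have ad: "0 \<le> a \<bullet> d" using ray[of 1] aQ by simp
  have "b \<le> a \<bullet> Q"
  proof (rule field_le_epsilon)
    fix e :: real
    assume "0 < e"
    then have "b \<le> a \<bullet> Q + e / (a \<bullet> d + 1) * (a \<bullet> d)" using ray[of "e / (a \<bullet> d + 1)"] ad by simp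
    also have "\<dots> \<le> a \<bullet> Q + e" using \<open>0 < e\<close> ad by (simp add: field_simps)
    finally show "b \<le> a \<bullet> Q + e" .
  qed
  have supp: "(k - Q) \<bullet> a \<le> 0" if "k \<in> S" for k
  proof -
    have "a \<bullet> k \<le> a \<bullet> Q" using aS that \<open>b \<le> a \<bullet> Q\<close> by fastforce
    then show ?thesis unfolding inner_diff_left by (simp add: inner_commute)
  qed
  show ?thesis
  proof (rule that[of "a /\<^sub>R norm a"])
    show "norm (a /\<^sub>R norm a) = 1" "0 \<le> (a /\<^sub>R norm a) \<bullet> d" using a ad by simp_all
    show "(k - Q) \<bullet> (a /\<^sub>R norm a) \<le> 0" if "k \<in> S" for k
      using supp[OF that] by (simp add: mult_nonneg_nonpos)
  qed
qed

lemma Inter_cballs_subset_cball_at_exit_point: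
  fixes A :: "'a::euclidean_space set"
  defines "K \<equiv> \<Inter>a\<in>A. cball a 1"
  assumes Q: "Q \<in> K" and exit: "\<And>e. 0 < e \<Longrightarrow> Q + e *\<^sub>R d \<notin> K"
  obtains n where "norm n = 1" "0 \<le> n \<bullet> d" "K \<subseteq> cball (Q - n) 1"
proof -
  have "convex K" unfolding K_def by (simp add: convex_INT)
  then obtain n where "norm n = 1" "0 \<le> n \<bullet> d" "\<And>k. k \<in> K \<Longrightarrow> (k - Q) \<bullet> n \<le> 0"
    using convex_supporting_normal Q exit by metis
  with that show ?thesis
    using Inter_cballs_subset_supporting_cball[of Q A n] Q by (simp add: K_def)
qed

section \<open>Chords and Steiner symmetrals\<close>

lemma proj_perp_uminus [simp]: "proj_perp (- u) y = proj_perp u y"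
  by (simp add: proj_perp_def)

lemma inner_proj_perp_unit:
  assumes "norm u = 1"
  shows "proj_perp u y \<bullet> u = 0"
  using assms by (simp add: proj_perp_def inner_diff_left norm_eq_1)

lemma chord_lo_uminus: "chord_lo L (- u) x = - chord_hi L u x"
proof -
  have "{t. x + t *\<^sub>R - u \<in> L} = uminus ` {t. x + t *\<^sub>R u \<in> L}"
  proof (intro set_eqI iffI)
    fix t
    assume "t \<in> {t. x + t *\<^sub>R - u \<in> L}"
    then have "- t \<in> {t. x + t *\<^sub>R u \<in> L}" by simp
    then show "t \<in> uminus ` {t. x + t *\<^sub>R u \<in> L}" by (rule rev_image_eqI) simp
  qed auto
  then show ?thesis by (simp add: chord_lo_def chord_hi_def Inf_real_def image_image)
qed

lemma chord_hi_uminus: "chord_hi L (- u) x = - chord_lo L u x"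
  using chord_lo_uminus[of L "- u" x] by simp

lemma steiner_sym_uminus: "steiner_sym (- u) L = steiner_sym u L"
proof -
  have "z \<in> steiner_sym (- u) L" if "z \<in> steiner_sym u L" for z u
  proof -
    from that obtain x t where "z = x + t *\<^sub>R u" "x \<in> proj_perp u ` L"
      "\<bar>t\<bar> \<le> (chord_hi L u x - chord_lo L u x) / 2"
      by (auto simp: steiner_sym_def)
    then show ?thesis
      unfolding steiner_sym_def chord_lo_uminus chord_hi_uminus proj_perp_uminus
      by (intro CollectI exI[of _ x] exI[of _ "- t"]) simp
  qed
  from this[of _ u] this[of _ "- u"] show ?thesis by auto
qed

lemma chord_eq_atLeastAtMost:
  fixes L :: "(real^2) set"
  assumes L: "compact L" "convex L" and u: "u \<noteq> 0" and x: "x \<in> proj_perp u ` L"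
  shows "{t. x + t *\<^sub>R u \<in> L} = {chord_lo L u x..chord_hi L u x}"
proof -
  define C where "C = {t. x + t *\<^sub>R u \<in> L}"
  obtain y where "y \<in> L" "x = proj_perp u y" using x by blast
  then have "x + (y \<bullet> u) *\<^sub>R u \<in> L" by (simp add: proj_perp_def)
  then have "C \<noteq> {}" by (auto simp: C_def)
  have "closed C"
  proof -
    have "C = (\<lambda>t. x + t *\<^sub>R u) -` L" by (auto simp: C_def)
    then show ?thesis
      using compact_imp_closed[OF L(1)] by (simp add: continuous_closed_vimage)
  qed
  moreover have "bounded C"
  proof -
    obtain B where B: "\<And>y. y \<in> L \<Longrightarrow> norm y \<le> B"
      using compact_imp_bounded[OF L(1)] by (auto simp: bounded_iff)
    have "\<bar>t\<bar> \<le> (B + norm x) / norm u" if "t \<in> C" for t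
    proof -
      have "\<bar>t\<bar> * norm u = norm (x + t *\<^sub>R u - x)" by simp
      also have "\<dots> \<le> B + norm x"
        using B[of "x + t *\<^sub>R u"] that norm_triangle_ineq4[of "x + t *\<^sub>R u" x] by (simp add: C_def)
      finally show ?thesis using u by (simp add: field_simps)
    qed
    then show ?thesis by (auto simp: bounded_iff)
  qed
  moreover have "convex C"
  proof (rule convexI)
    fix s t a b :: real
    assume st: "s \<in> C" "t \<in> C" and ab: "0 \<le> a" "0 \<le> b" "a + b = 1"
    have "x + (a *\<^sub>R s + b *\<^sub>R t) *\<^sub>R u = (a + b) *\<^sub>R x + a *\<^sub>R (s *\<^sub>R u) + b *\<^sub>R (t *\<^sub>R u)"
      using ab by (simp add: algebra_simps)
    also have "\<dots> = a *\<^sub>R (x + s *\<^sub>R u) + b *\<^sub>R (x + t *\<^sub>R u)"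
      by (simp add: algebra_simps)
    also have "\<dots> \<in> L" using convexD[OF L(2)] st ab by (simp add: C_def)
    finally show "a *\<^sub>R s + b *\<^sub>R t \<in> C" by (simp add: C_def)
  qed
  ultimately obtain lo hi where C: "C = {lo..hi}"
    using connected_compact_interval_1 convex_connected compact_eq_bounded_closed by metis
  moreover have "lo \<le> hi" using \<open>C \<noteq> {}\<close> C by simp
  ultimately show ?thesis by (simp add: C_def chord_lo_def chord_hi_def)
qed

lemma mem_chord_iff:
  fixes L :: "(real^2) set"
  assumes "compact L" "convex L" "u \<noteq> 0" "x \<in> proj_perp u ` L"
  shows "x + t *\<^sub>R u \<in> L \<longleftrightarrow> chord_lo L u x \<le> t \<and> t \<le> chord_hi L u x"
  using chord_eq_atLeastAtMost[OF assms] by (simp add: set_eq_iff)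

lemma chord_lo_le_chord_hi:
  fixes L :: "(real^2) set"
  assumes "compact L" "convex L" "u \<noteq> 0" "x \<in> proj_perp u ` L"
  shows "chord_lo L u x \<le> chord_hi L u x"
proof -
  obtain y where "y \<in> L" "x = proj_perp u y" using assms(4) by blast
  then have "x + (y \<bullet> u) *\<^sub>R u \<in> L" by (simp add: proj_perp_def)
  then show ?thesis using mem_chord_iff[OF assms] by auto
qed

lemma norm_reflection:
  fixes u w :: "'a::real_inner"
  assumes "norm u = 1"
  shows "norm (w - (2 * (w \<bullet> u)) *\<^sub>R u) = norm w"
proof -
  have "(norm (w - (2 * (w \<bullet> u)) *\<^sub>R u))\<^sup>2 = (norm w)\<^sup>2"
    using assms by (simp add: power2_norm_eq_inner inner_diff_left inner_diff_right inner_commute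
        algebra_simps norm_eq_1)
  then show ?thesis by (simp add: power2_eq_iff_nonneg)
qed

lemma steiner_sym_subset_cball:
  fixes L :: "(real^2) set"
  assumes L: "compact L" "convex L" and u: "norm u = 1" and c: "L \<subseteq> cball c 1"
  shows "steiner_sym u L \<subseteq> cball (proj_perp u c) 1"
proof
  fix z
  assume "z \<in> steiner_sym u L"
  then obtain x t where x: "x \<in> proj_perp u ` L" and z: "z = x + t *\<^sub>R u"
    and t: "\<bar>t\<bar> \<le> (chord_hi L u x - chord_lo L u x) / 2"
    by (auto simp: steiner_sym_def)
  define m where "m = (chord_hi L u x + chord_lo L u x) / 2"
  define w1 w2 where "w1 = x + (m + t) *\<^sub>R u - c" and "w2 = x + (m - t) *\<^sub>R u - c"
  have "u \<noteq> 0" using u by auto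
  moreover have "chord_lo L u x \<le> m + t \<and> m + t \<le> chord_hi L u x \<and>
      chord_lo L u x \<le> m - t \<and> m - t \<le> chord_hi L u x"
    using t unfolding m_def by (simp only: abs_le_iff) (simp add: field_simps)
  ultimately have "x + (m + t) *\<^sub>R u \<in> L" "x + (m - t) *\<^sub>R u \<in> L"
    by (simp_all add: mem_chord_iff[OF L _ x])
  then have w: "norm w1 \<le> 1" "norm w2 \<le> 1"
    using c by (auto simp: w1_def w2_def dist_norm norm_minus_commute)
  have "x \<bullet> u = 0" using x inner_proj_perp_unit[OF u] by blast
  then have w2u: "w2 \<bullet> u = m - t - c \<bullet> u"
    using u by (simp add: w2_def inner_diff_left inner_add_left norm_eq_1)
  \<comment> \<open>\<open>z\<close> is the midpoint of a chord point and the mirror image of another one\<close>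
  have "z - proj_perp u c = (1/2) *\<^sub>R (w1 + (w2 - (2 * (w2 \<bullet> u)) *\<^sub>R u))"
    unfolding w2u by (simp add: vec_eq_iff z w1_def w2_def proj_perp_def field_simps)
  then have "norm (z - proj_perp u c) \<le> (1/2) * (norm w1 + norm (w2 - (2 * (w2 \<bullet> u)) *\<^sub>R u))"
    using norm_triangle_ineq[of w1] by simp
  also have "\<dots> \<le> 1" using w norm_reflection[OF u, of w2] by simp
  finally show "z \<in> cball (proj_perp u c) 1"
    by (simp add: dist_norm norm_minus_commute)
qed

section \<open>Steiner symmetrals of intersections of unit disks\<close>

lemma unit_vector_perpendicular_frame:
  fixes u :: "real^2"
  assumes u: "norm u = 1"
  obtains v where "norm v = 1" "v \<bullet> u = 0" "\<And>y. y = (y \<bullet> v) *\<^sub>R v + (y \<bullet> u) *\<^sub>R u"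
proof
  define v :: "real^2" where "v = (\<chi> i. if i = 1 then - (u$2) else u$1)"
  have v: "v$1 = - (u$2)" "v$2 = u$1" by (simp_all add: v_def)
  have uu: "u$1 * u$1 + u$2 * u$2 = 1"
    using u by (simp add: norm_eq_1 inner_vec_def sum_2)
  show "v \<bullet> u = 0" by (simp add: inner_vec_def sum_2 v)
  show "norm v = 1" using uu by (simp add: norm_eq_1 inner_vec_def sum_2 v algebra_simps)
  show "y = (y \<bullet> v) *\<^sub>R v + (y \<bullet> u) *\<^sub>R u" for y
  proof -
    have "((y \<bullet> v) *\<^sub>R v + (y \<bullet> u) *\<^sub>R u)$i = y$i * (u$1 * u$1 + u$2 * u$2)" if "i = 1 \<or> i = 2" for i
      using that by (auto simp: inner_vec_def sum_2 v algebra_simps)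
    then show ?thesis using uu by (simp add: vec_eq_iff forall_2)
  qed
qed

lemma S2_if_cball_separated:
  assumes "\<And>p. p \<notin> S \<Longrightarrow> \<exists>c. S \<subseteq> cball c 1 \<and> p \<notin> cball c 1"
  shows "S \<in> S2"
proof -
  have "S = (\<Inter>c\<in>{c. S \<subseteq> cball c 1}. cball c 1)"
    using assms by blast
  then show ?thesis by (auto simp: S2_def)
qed

locale unit_ball_body =
  fixes A :: "(real^2) set" and u v :: "real^2"
  assumes A_nonempty: "A \<noteq> {}" and body_nonempty: "(\<Inter>a\<in>A. cball a 1) \<noteq> {}"
    and norm_u: "norm u = 1" and norm_v: "norm v = 1" and inner_vu: "v \<bullet> u = 0"
    and decompose: "\<And>y. y = (y \<bullet> v) *\<^sub>R v + (y \<bullet> u) *\<^sub>R u"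
begin

abbreviation body :: "(real^2) set" where
  "body \<equiv> \<Inter>a\<in>A. cball a 1"

abbreviation symmetral :: "(real^2) set" where
  "symmetral \<equiv> steiner_sym u body"

lemma unit_ball_body_uminus_u: "unit_ball_body A (- u) v"
  by unfold_locales (use A_nonempty body_nonempty norm_u norm_v inner_vu decompose in auto)

lemma unit_ball_body_uminus_v: "unit_ball_body A u (- v)"
  by unfold_locales (use A_nonempty body_nonempty norm_u norm_v inner_vu decompose in auto)

lemma inner_uu: "u \<bullet> u = 1" and inner_vv: "v \<bullet> v = 1" and inner_uv: "u \<bullet> v = 0"
  using norm_u norm_v inner_vu by (simp_all add: norm_eq_1 inner_commute)

lemma u_nonzero: "u \<noteq> 0"
  using norm_u by auto

lemma inner_proj_perp_v: "proj_perp u y \<bullet> v = y \<bullet> v"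
  by (simp add: proj_perp_def inner_diff_left inner_uv)

lemma dist_sq_coords: "(dist a b)\<^sup>2 = (a \<bullet> v - b \<bullet> v)\<^sup>2 + (a \<bullet> u - b \<bullet> u)\<^sup>2"
proof -
  have "(a - b) \<bullet> (a - b) = ((a - b) \<bullet> v)\<^sup>2 + ((a - b) \<bullet> u)\<^sup>2"
    by (subst (1 2) decompose) (simp add: inner_add_left inner_add_right inner_uu inner_vv
        inner_uv inner_vu power2_eq_square)
  then show ?thesis by (simp add: dist_norm power2_norm_eq_inner inner_diff_left)
qed

lemma mem_cball_frame:
  "y \<in> cball (s *\<^sub>R v + h *\<^sub>R u) 1 \<longleftrightarrow>
    \<bar>y \<bullet> v - s\<bar> \<le> 1 \<and> \<bar>y \<bullet> u - h\<bar> \<le> circle_height (y \<bullet> v - s)"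
proof -
  have "y \<in> cball (s *\<^sub>R v + h *\<^sub>R u) 1 \<longleftrightarrow> (dist (s *\<^sub>R v + h *\<^sub>R u) y)\<^sup>2 \<le> 1"
    by (simp add: power_le_one_iff)
  also have "\<dots> \<longleftrightarrow> (y \<bullet> v - s)\<^sup>2 + (y \<bullet> u - h)\<^sup>2 \<le> 1"
    by (simp add: dist_sq_coords power2_commute inner_add_left inner_vv inner_uu inner_uv inner_vu)
  finally show ?thesis by (simp add: sq_add_sq_le_1_iff)
qed

lemma proj_perp_eq: "proj_perp u y = (y \<bullet> v) *\<^sub>R v"
  using decompose[of y] by (simp add: proj_perp_def algebra_simps)

lemma inner_chord_point:
  assumes "x \<in> proj_perp u ` body"
  shows "(x + t *\<^sub>R u) \<bullet> v = x \<bullet> v" "(x + t *\<^sub>R u) \<bullet> u = t"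
  using assms by (auto simp: proj_perp_eq inner_add_left inner_vv inner_uv inner_vu inner_uu)

lemma body_compact: "compact body"
proof -
  obtain a where "a \<in> A" using A_nonempty by blast
  then have "bounded body" by (meson INT_lower bounded_cball bounded_subset)
  then show ?thesis by (simp add: compact_eq_bounded_closed closed_INT)
qed

lemma body_convex: "convex body"
  by (simp add: convex_INT)

lemma body_chord_iff:
  "x \<in> proj_perp u ` body \<Longrightarrow>
    x + t *\<^sub>R u \<in> body \<longleftrightarrow> chord_lo body u x \<le> t \<and> t \<le> chord_hi body u x"
  using mem_chord_iff[OF body_compact body_convex u_nonzero] by blast

lemma body_chord_lo_le_hi: "x \<in> proj_perp u ` body \<Longrightarrow> chord_lo body u x \<le> chord_hi body u x"
  using chord_lo_le_chord_hi[OF body_compact body_convex u_nonzero] by blast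

lemma proj_perp_at_level:
  assumes "k1 \<in> body" "k2 \<in> body" "k1 \<bullet> v \<le> s" "s \<le> k2 \<bullet> v"
  obtains x where "x \<in> proj_perp u ` body" "x \<bullet> v = s"
proof -
  have "connected ((\<lambda>k. k \<bullet> v) ` body)"
    by (intro connected_continuous_image continuous_intros convex_connected body_convex)
  then have "s \<in> (\<lambda>k. k \<bullet> v) ` body"
    using assms unfolding connected_iff_interval by blast
  then show ?thesis using that inner_proj_perp_v by blast
qed

lemma symmetral_subset_cball:
  assumes "\<And>x. x \<in> proj_perp u ` body \<Longrightarrow> \<bar>x \<bullet> v - s\<bar> \<le> 1 \<and>
      (chord_hi body u x - chord_lo body u x) / 2 + \<bar>h\<bar> \<le> circle_height (x \<bullet> v - s)"
  shows "symmetral \<subseteq> cball (s *\<^sub>R v + h *\<^sub>R u) 1"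
proof
  fix z
  assume "z \<in> symmetral"
  then obtain x t where x: "x \<in> proj_perp u ` body" and z: "z = x + t *\<^sub>R u"
    and t: "\<bar>t\<bar> \<le> (chord_hi body u x - chord_lo body u x) / 2"
    by (auto simp: steiner_sym_def)
  have "\<bar>t - h\<bar> \<le> circle_height (x \<bullet> v - s)"
    using assms[OF x] t abs_triangle_ineq4[of t h] by linarith
  then show "z \<in> cball (s *\<^sub>R v + h *\<^sub>R u) 1"
    using assms[OF x] unfolding mem_cball_frame z inner_chord_point[OF x] by simp
qed

lemma symmetralI:
  "x \<in> proj_perp u ` body \<Longrightarrow> \<bar>t\<bar> \<le> (chord_hi body u x - chord_lo body u x) / 2 \<Longrightarrow>
    x + t *\<^sub>R u \<in> symmetral"
  by (auto simp: steiner_sym_def)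

text \<open>Points of the body on both sides of the chord rule out a supporting line at its top that is
  parallel to \<open>u\<close>.\<close>

lemma cball_at_chord_top:
  assumes x: "x \<in> proj_perp u ` body"
    and k1: "k1 \<in> body" "k1 \<bullet> v < x \<bullet> v" and k2: "k2 \<in> body" "x \<bullet> v < k2 \<bullet> v"
  obtains \<alpha> where "\<bar>\<alpha>\<bar> < 1"
    "body \<subseteq> cball ((x \<bullet> v - \<alpha>) *\<^sub>R v + (chord_hi body u x - circle_height \<alpha>) *\<^sub>R u) 1"
proof -
  define b where "b = chord_hi body u x"
  define Q where "Q = x + b *\<^sub>R u"
  have Q: "Q \<in> body"
    using body_chord_iff[OF x] body_chord_lo_le_hi[OF x] by (simp add: Q_def b_def)
  have "Q + e *\<^sub>R u \<notin> body" if "0 < e" for e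
  proof -
    have "Q + e *\<^sub>R u = x + (b + e) *\<^sub>R u" by (simp add: Q_def algebra_simps)
    then show ?thesis using body_chord_iff[OF x] that by (simp add: b_def)
  qed
  then obtain n where n: "norm n = 1" "0 \<le> n \<bullet> u" and ball: "body \<subseteq> cball (Q - n) 1"
    using Inter_cballs_subset_cball_at_exit_point[OF Q] by metis
  define \<alpha> where "\<alpha> = n \<bullet> v"
  have "1 = \<alpha>\<^sup>2 + (n \<bullet> u)\<^sup>2" using dist_sq_coords[of n 0] n by (simp add: \<alpha>_def)
  then have "1 - \<alpha>\<^sup>2 = (n \<bullet> u)\<^sup>2" by simp
  then have nu: "n \<bullet> u = circle_height \<alpha>"
    using n(2) by (simp add: circle_height_def)
  have "Q - n = (x \<bullet> v - \<alpha>) *\<^sub>R v + (b - circle_height \<alpha>) *\<^sub>R u"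
    using decompose[of "Q - n"] inner_chord_point[OF x] nu
    by (simp add: Q_def \<alpha>_def inner_diff_left)
  with ball have ball': "body \<subseteq> cball ((x \<bullet> v - \<alpha>) *\<^sub>R v + (b - circle_height \<alpha>) *\<^sub>R u) 1"
    by simp
  then have "\<bar>k1 \<bullet> v - (x \<bullet> v - \<alpha>)\<bar> \<le> 1" "\<bar>k2 \<bullet> v - (x \<bullet> v - \<alpha>)\<bar> \<le> 1"
    using subsetD[OF ball' k1(1)] subsetD[OF ball' k2(1)] unfolding mem_cball_frame by simp_all
  then have "\<bar>\<alpha>\<bar> < 1" using k1(2) k2(2) by (simp only: abs_le_iff) linarith
  then show ?thesis using that ball' by (simp add: b_def)
qed

lemma cball_at_chord_bottom:
  assumes x: "x \<in> proj_perp u ` body"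
    and k1: "k1 \<in> body" "k1 \<bullet> v < x \<bullet> v" and k2: "k2 \<in> body" "x \<bullet> v < k2 \<bullet> v"
  obtains \<alpha> where "\<bar>\<alpha>\<bar> < 1"
    "body \<subseteq> cball ((x \<bullet> v - \<alpha>) *\<^sub>R v + (chord_lo body u x + circle_height \<alpha>) *\<^sub>R u) 1"
proof -
  interpret flip: unit_ball_body A "- u" v by (rule unit_ball_body_uminus_u)
  have "x \<in> proj_perp (- u) ` body" using x by simp
  then obtain \<alpha> where "\<bar>\<alpha>\<bar> < 1"
    "body \<subseteq> cball ((x \<bullet> v - \<alpha>) *\<^sub>R v + (chord_hi body (- u) x - circle_height \<alpha>) *\<^sub>R - u) 1"
    using flip.cball_at_chord_top k1 k2 by blast
  moreover have "(chord_hi body (- u) x - circle_height \<alpha>) *\<^sub>R - u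
      = (chord_lo body u x + circle_height \<alpha>) *\<^sub>R u"
    by (simp add: chord_hi_uminus algebra_simps)
  ultimately show ?thesis using that by metis
qed

lemma separating_cball_beyond:
  assumes p: "p \<notin> symmetral" and beyond: "\<And>k. k \<in> body \<Longrightarrow> k \<bullet> v \<le> p \<bullet> v"
  shows "\<exists>c. symmetral \<subseteq> cball c 1 \<and> p \<notin> cball c 1"
proof -
  have "continuous_on body (\<lambda>k. k \<bullet> v)" by (intro continuous_intros)
  from continuous_attains_sup[OF body_compact body_nonempty this]
  obtain Q where Q: "Q \<in> body" and Q_max: "\<forall>k\<in>body. k \<bullet> v \<le> Q \<bullet> v" ..
  have "body \<subseteq> cball (Q - v) 1"
    using Inter_cballs_subset_supporting_cball[OF Q norm_v] Q_max by (simp add: inner_diff_left)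
  then have "symmetral \<subseteq> cball (proj_perp u (Q - v)) 1"
    by (rule steiner_sym_subset_cball[OF body_compact body_convex norm_u])
  moreover have center: "proj_perp u (Q - v) = (Q \<bullet> v - 1) *\<^sub>R v + 0 *\<^sub>R u"
    by (simp add: proj_perp_eq inner_diff_left inner_vv)
  moreover have "p \<notin> cball ((Q \<bullet> v - 1) *\<^sub>R v + 0 *\<^sub>R u) 1"
  proof
    assume "p \<in> cball ((Q \<bullet> v - 1) *\<^sub>R v + 0 *\<^sub>R u) 1"
    then have "\<bar>p \<bullet> v - (Q \<bullet> v - 1)\<bar> \<le> 1" "\<bar>p \<bullet> u\<bar> \<le> circle_height (p \<bullet> v - (Q \<bullet> v - 1))"
      unfolding mem_cball_frame by simp_all
    then have "p \<bullet> v = Q \<bullet> v" "p \<bullet> u = 0"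
      using beyond[OF Q] by (auto simp: abs_le_iff circle_height_def)
    then have "p = proj_perp u Q + 0 *\<^sub>R u"
      using decompose[of p] by (simp add: proj_perp_eq)
    moreover have "proj_perp u Q \<in> proj_perp u ` body" using Q by blast
    ultimately have "p \<in> symmetral"
      using symmetralI[of "proj_perp u Q" 0] body_chord_lo_le_hi[of "proj_perp u Q"] by simp
    with p show False ..
  qed
  ultimately show ?thesis by auto
qed

text \<open>The unit disk whose upper arc passes, over \<open>x0\<close>, through the half width of the chord with
  the mean slope of the arcs of two unit disks touching the top and the bottom of that chord.\<close>

lemma symmetral_subset_mean_slope_cball:
  assumes x0: "x0 \<in> proj_perp u ` body" and \<alpha>: "\<bar>\<alpha>1\<bar> < 1" "\<bar>\<alpha>2\<bar> < 1"
    and top: "body \<subseteq> cball ((x0 \<bullet> v - \<alpha>1) *\<^sub>R v + (chord_hi body u x0 - circle_height \<alpha>1) *\<^sub>R u) 1"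
    and bot: "body \<subseteq> cball ((x0 \<bullet> v - \<alpha>2) *\<^sub>R v + (chord_lo body u x0 + circle_height \<alpha>2) *\<^sub>R u) 1"
  defines "\<gamma> \<equiv> mean_slope_abscissa \<alpha>1 \<alpha>2"
    and "w \<equiv> (chord_hi body u x0 - chord_lo body u x0) / 2"
  shows "w \<le> circle_height \<gamma>"
    and "symmetral \<subseteq> cball ((x0 \<bullet> v - \<gamma>) *\<^sub>R v + (w - circle_height \<gamma>) *\<^sub>R u) 1"
proof -
  define a b where "a = chord_lo body u x0" and "b = chord_hi body u x0"
  have chords:
    "\<bar>x \<bullet> v - x0 \<bullet> v + \<alpha>1\<bar> \<le> 1 \<and>
      \<bar>t - b + circle_height \<alpha>1\<bar> \<le> circle_height (x \<bullet> v - x0 \<bullet> v + \<alpha>1)"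
    "\<bar>x \<bullet> v - x0 \<bullet> v + \<alpha>2\<bar> \<le> 1 \<and>
      \<bar>t - a - circle_height \<alpha>2\<bar> \<le> circle_height (x \<bullet> v - x0 \<bullet> v + \<alpha>2)"
    if "x \<in> proj_perp u ` body" "x + t *\<^sub>R u \<in> body" for x t
    using subsetD[OF top that(2)] subsetD[OF bot that(2)]
    unfolding mem_cball_frame inner_chord_point[OF that(1)] a_def b_def
    by (simp_all add: algebra_simps)
  have "b - a \<le> 2 * circle_height \<alpha>1" "b - a \<le> 2 * circle_height \<alpha>2"
    using chords[OF x0, of a] chords[OF x0, of b] body_chord_iff[OF x0] body_chord_lo_le_hi[OF x0]
    by (auto simp: a_def b_def abs_le_iff)
  then show half_width: "w \<le> circle_height \<gamma>"
    using circle_height_mean_slope_abscissa_ge_min[OF \<alpha>] by (simp add: \<gamma>_def w_def a_def b_def)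
  show "symmetral \<subseteq> cball ((x0 \<bullet> v - \<gamma>) *\<^sub>R v + (w - circle_height \<gamma>) *\<^sub>R u) 1"
  proof (rule symmetral_subset_cball)
    fix x
    assume x: "x \<in> proj_perp u ` body"
    have "x + chord_hi body u x *\<^sub>R u \<in> body" "x + chord_lo body u x *\<^sub>R u \<in> body"
      using body_chord_iff[OF x] body_chord_lo_le_hi[OF x] by simp_all
    then have "\<bar>x \<bullet> v - x0 \<bullet> v + \<gamma>\<bar> \<le> 1 \<and>
        (chord_hi body u x - chord_lo body u x) / 2 + (circle_height \<gamma> - (b - a) / 2)
          \<le> circle_height (x \<bullet> v - x0 \<bullet> v + \<gamma>)"
      using chords[OF x] abs_add_mean_slope_abscissa_le[OF \<alpha>] half_width_le_circle_height[OF \<alpha>]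
      by (simp add: \<gamma>_def)
    then show "\<bar>x \<bullet> v - (x0 \<bullet> v - \<gamma>)\<bar> \<le> 1 \<and>
        (chord_hi body u x - chord_lo body u x) / 2 + \<bar>w - circle_height \<gamma>\<bar>
          \<le> circle_height (x \<bullet> v - (x0 \<bullet> v - \<gamma>))"
      using half_width by (simp add: w_def a_def b_def algebra_simps)
  qed
qed

lemma separating_cball_between:
  assumes p: "p \<notin> symmetral" and k1: "k1 \<in> body" "k1 \<bullet> v < p \<bullet> v"
    and k2: "k2 \<in> body" "p \<bullet> v < k2 \<bullet> v" and upper: "0 \<le> p \<bullet> u"
  shows "\<exists>c. symmetral \<subseteq> cball c 1 \<and> p \<notin> cball c 1"
proof -
  obtain x0 where x0: "x0 \<in> proj_perp u ` body" and x0v: "x0 \<bullet> v = p \<bullet> v"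
    using proj_perp_at_level[OF k1(1) k2(1)] k1(2) k2(2) by (metis less_imp_le)
  define w where "w = (chord_hi body u x0 - chord_lo body u x0) / 2"
  have p_above: "w < p \<bullet> u"
  proof (rule ccontr)
    assume "\<not> w < p \<bullet> u"
    then have "x0 + (p \<bullet> u) *\<^sub>R u \<in> symmetral"
      using upper by (intro symmetralI[OF x0]) (simp add: w_def)
    moreover have "x0 + (p \<bullet> u) *\<^sub>R u = p"
      using x0 x0v decompose[of p, symmetric] by (auto simp: proj_perp_eq inner_vv)
    ultimately show False using p by simp
  qed
  obtain \<alpha>1 \<alpha>2 where \<alpha>: "\<bar>\<alpha>1\<bar> < 1" "\<bar>\<alpha>2\<bar> < 1"
    and top: "body \<subseteq> cball ((x0 \<bullet> v - \<alpha>1) *\<^sub>R v + (chord_hi body u x0 - circle_height \<alpha>1) *\<^sub>R u) 1"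
    and bot: "body \<subseteq> cball ((x0 \<bullet> v - \<alpha>2) *\<^sub>R v + (chord_lo body u x0 + circle_height \<alpha>2) *\<^sub>R u) 1"
    using cball_at_chord_top[OF x0 k1(1) _ k2(1)] cball_at_chord_bottom[OF x0 k1(1) _ k2(1)]
      k1(2) k2(2) x0v by metis
  note mean = symmetral_subset_mean_slope_cball[OF x0 \<alpha> top bot]
  define \<gamma> where "\<gamma> = mean_slope_abscissa \<alpha>1 \<alpha>2"
  have "\<not> \<bar>p \<bullet> u - (w - circle_height \<gamma>)\<bar> \<le> circle_height \<gamma>"
    using p_above by (simp add: abs_le_iff)
  then have "p \<notin> cball ((x0 \<bullet> v - \<gamma>) *\<^sub>R v + (w - circle_height \<gamma>) *\<^sub>R u) 1"
    unfolding mem_cball_frame x0v by simp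
  with mean(2) show ?thesis by (auto simp: \<gamma>_def w_def)
qed

lemma separating_cball:
  assumes p: "p \<notin> symmetral"
  shows "\<exists>c. symmetral \<subseteq> cball c 1 \<and> p \<notin> cball c 1"
proof -
  interpret flip_u: unit_ball_body A "- u" v by (rule unit_ball_body_uminus_u)
  interpret flip_v: unit_ball_body A u "- v" by (rule unit_ball_body_uminus_v)
  consider "\<forall>k\<in>body. k \<bullet> v \<le> p \<bullet> v" | "\<forall>k\<in>body. p \<bullet> v \<le> k \<bullet> v"
    | k1 k2 where "k1 \<in> body" "k1 \<bullet> v < p \<bullet> v" "k2 \<in> body" "p \<bullet> v < k2 \<bullet> v"
    by (meson not_le)
  then show ?thesis
  proof cases
    case 1
    then show ?thesis using separating_cball_beyond p by blast
  next
    case 2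
    then show ?thesis using flip_v.separating_cball_beyond p by simp
  next
    case (3 k1 k2)
    show ?thesis
    proof (cases "0 \<le> p \<bullet> u")
      case True
      then show ?thesis using separating_cball_between p 3 by blast
    next
      case False
      then show ?thesis
        using flip_u.separating_cball_between[of p k1 k2] p 3 by (simp add: steiner_sym_uminus)
    qed
  qed
qed

end

theorem theorem5p12:
  fixes K :: "(real^2) set" and u :: "real^2"
  assumes "K \<in> S2" and "K \<noteq> {}" and "K \<noteq> UNIV"
    and "norm u = 1"
  shows "steiner_sym u K \<in> S2"
proof -
  obtain A where K: "K = (\<Inter>a\<in>A. cball a 1)" using assms(1) by (auto simp: S2_def)
  obtain v where "norm v = 1" "v \<bullet> u = 0" "\<And>y. y = (y \<bullet> v) *\<^sub>R v + (y \<bullet> u) *\<^sub>R u"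
    using unit_vector_perpendicular_frame[OF assms(4)] by blast
  then interpret unit_ball_body A u v
    using K assms(2-4) by unfold_locales auto
  show ?thesis
    unfolding K by (rule S2_if_cball_separated) (rule separating_cball)
qed

end
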